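(* Let $\mathbb{K}$ be a field of characteristic zero, let $p,q\in\mathbb{Z}^n_{\ge0}$ be nonzero vectors and let $\beta\in\mathbb{K}^n\setminus\{0\}$. Then the following are equivalent: (i) the derivations $\Delta^p_\beta$ and $\Delta^q_\beta$ of $\mathbb{K}[x_1,\ldots,x_n]$ generate a finite dimensional Lie algebra; (ii) $[\Delta^p_\beta,\Delta^q_\beta]=0$; (iii) $\langle\beta,p\rangle=\langle\beta,q\rangle$.
   Context: For $p\in\mathbb{Z}^n_{\ge0}$ and $\beta\in\mathbb{K}^n$, $\Delta^p_\beta:=x_1^{p_1}\cdots x_n^{p_n}\sum_{j=1}^n\beta_jx_j\partial_j$, where $\partial_j=\partial/\partial x_j$. $\langle\beta,u\rangle:=\sum_i\beta_iu_i$. The Lie bracket is the commutator of derivations. *)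

theory Defs
  imports Main "HOL-Library.Poly_Mapping"
begin

text \<open>Polynomials in the variables x_j, j ranging over the finite type 'n (so n = CARD('n)),
  with coefficients in 'a: finitely supported maps from exponent vectors ('n => nat) to 'a.\<close>
type_synonym ('n, 'a) mpoly = "('n \<Rightarrow> nat) \<Rightarrow>\<^sub>0 'a"

type_synonym ('n, 'a) mop = "('n, 'a) mpoly \<Rightarrow> ('n, 'a) mpoly"

definition pairing :: "('n::finite \<Rightarrow> 'a::comm_semiring_1) \<Rightarrow> ('n \<Rightarrow> nat) \<Rightarrow> 'a" where
  "pairing \<beta> u = (\<Sum>j\<in>UNIV. \<beta> j * of_nat (u j))"

text \<open>Delta^p_beta = x^p * sum_j beta_j x_j d/dx_j; on the monomial x^m it gives
  <beta,m> x^(m+p); extended linearly.\<close>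
definition Delta :: "('n::finite \<Rightarrow> nat) \<Rightarrow> ('n \<Rightarrow> 'a::field) \<Rightarrow> ('n, 'a) mop" where
  "Delta p \<beta> f = (\<Sum>m\<in>Poly_Mapping.keys f. Poly_Mapping.single (\<lambda>j. m j + p j) (pairing \<beta> m * Poly_Mapping.lookup f m))"

definition lie_bracket :: "('n, 'a::field) mop \<Rightarrow> ('n, 'a) mop \<Rightarrow> ('n, 'a) mop" where
  "lie_bracket D E = (\<lambda>f. D (E f) - E (D f))"

definition op_scale :: "'a::field \<Rightarrow> ('n, 'a) mop \<Rightarrow> ('n, 'a) mop" where
  "op_scale c D = (\<lambda>f. Poly_Mapping.map (\<lambda>x. c * x) (D f))"

inductive_set lie_generated :: "('n, 'a::field) mop \<Rightarrow> ('n, 'a) mop \<Rightarrow> ('n, 'a) mop set"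
  for D E where
  gen1: "D \<in> lie_generated D E"
| gen2: "E \<in> lie_generated D E"
| zero: "(\<lambda>f. 0) \<in> lie_generated D E"
| add: "X \<in> lie_generated D E \<Longrightarrow> Y \<in> lie_generated D E \<Longrightarrow> (\<lambda>f. X f + Y f) \<in> lie_generated D E"
| scale: "X \<in> lie_generated D E \<Longrightarrow> op_scale c X \<in> lie_generated D E"
| bracket: "X \<in> lie_generated D E \<Longrightarrow> Y \<in> lie_generated D E \<Longrightarrow> lie_bracket X Y \<in> lie_generated D E"

definition fin_dim_ops :: "('n, 'a::field) mop set \<Rightarrow> bool" where
  "fin_dim_ops L \<longleftrightarrow> (\<exists>B. finite B \<and>
     (\<forall>X\<in>L. \<exists>c. X = (\<lambda>f. \<Sum>b\<in>B. op_scale (c b) b f)))"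

end

theory Submission
  imports Defs
begin

text \<open>The bracket of two operators of the family is again one of them,
  [Delta^s, Delta^r] = (<beta,r> - <beta,s>) Delta^(s+r), and no nonzero multiple of Delta^r
  vanishes. So [Delta^p, Delta^q] = (b - a) Delta^(p+q), where a = <beta,p> and b = <beta,q>,
  vanishes iff a = b, and then the two commuting linear generators span the whole Lie algebra.
  If a \<noteq> b, bracketing repeatedly with a suitable Delta^s (s one of p, q, p + q, chosen so that
  no coefficient <beta, r + k s> - <beta, s> vanishes; this is where characteristic zero enters)
  yields nonzero multiples of Delta^(r + k s) for every k. Applied to a monomial these operators
  have pairwise distinct supports, which is impossible in a finite dimensional space of operators.\<close>

lemma lookup_map_mult [simp]:
  fixes c :: "'a::mult_zero"
  shows "Poly_Mapping.lookup (Poly_Mapping.map ((*) c) f) k = c * Poly_Mapping.lookup f k"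
  by (simp add: map.rep_eq when_def)

lemma op_scale_eq_map: "op_scale c D f = Poly_Mapping.map ((*) c) (D f)"
  by (simp add: op_scale_def)

lemma lookup_op_scale [simp]:
  "Poly_Mapping.lookup (op_scale c X f) k = c * Poly_Mapping.lookup (X f) k"
  by (simp add: op_scale_eq_map)

lemma op_scale_one [simp]: "op_scale 1 X = X"
  by (intro ext poly_mapping_eqI) simp

lemma pairing_add: "pairing \<beta> (\<lambda>i. u i + v i) = pairing \<beta> u + pairing \<beta> v"
  by (simp add: pairing_def sum.distrib algebra_simps)

lemma pairing_add_mult:
  "pairing \<beta> (\<lambda>i. u i + k * v i) = pairing \<beta> u + of_nat k * pairing \<beta> v"
  by (simp add: pairing_def sum.distrib sum_distrib_left algebra_simps)

lemma pairing_nonzero_exists: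
  fixes \<beta> :: "'n::finite \<Rightarrow> 'a::comm_semiring_1"
  assumes "\<beta> j \<noteq> 0"
  shows "\<exists>m. pairing \<beta> m \<noteq> 0"
proof
  show "pairing \<beta> (\<lambda>i. if i = j then 1 else 0) \<noteq> 0"
    using assms by (simp add: pairing_def if_distrib cong: if_cong)
qed

lemma lookup_Delta:
  "Poly_Mapping.lookup (Delta p \<beta> f) k =
     (if p \<le> k then pairing \<beta> (k - p) * Poly_Mapping.lookup f (k - p) else 0)"
proof -
  have shift_eq: "(\<lambda>j. m j + p j) = k \<longleftrightarrow> p \<le> k \<and> m = k - p" for m
    by (subst eq_commute) (auto simp: fun_eq_iff le_fun_def)
  have "Poly_Mapping.lookup (Delta p \<beta> f) k =
     (\<Sum>m\<in>Poly_Mapping.keys f. if p \<le> k \<and> m = k - p then pairing \<beta> m * Poly_Mapping.lookup f m else 0)"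
    unfolding Delta_def lookup_sum lookup_single when_def shift_eq by (simp add: eq_commute)
  also have "\<dots> = (if p \<le> k then pairing \<beta> (k - p) * Poly_Mapping.lookup f (k - p) else 0)"
    by (cases "p \<le> k") (auto simp: sum.delta in_keys_iff)
  finally show ?thesis .
qed

lemma lookup_Delta_single:
  "Poly_Mapping.lookup (Delta r \<beta> (Poly_Mapping.single m c)) (\<lambda>i. m i + r i) = pairing \<beta> m * c"
proof -
  have "r \<le> (\<lambda>i. m i + r i)" and "(\<lambda>i. m i + r i) - r = m"
    by (auto simp: le_fun_def fun_eq_iff)
  then show ?thesis by (simp add: lookup_Delta)
qed

lemma op_scale_Delta_eq_zero_iff:
  assumes "\<beta> j \<noteq> 0"
  shows "op_scale c (Delta r \<beta>) = (\<lambda>f. 0) \<longleftrightarrow> c = 0"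
proof
  obtain m where m: "pairing \<beta> m \<noteq> 0" using pairing_nonzero_exists assms by blast
  assume "op_scale c (Delta r \<beta>) = (\<lambda>f. 0)"
  then have "Poly_Mapping.lookup (op_scale c (Delta r \<beta>) (Poly_Mapping.single m 1)) (\<lambda>i. m i + r i) = 0"
    by simp
  with m show "c = 0" by (simp add: lookup_Delta_single)
next
  assume "c = 0"
  then show "op_scale c (Delta r \<beta>) = (\<lambda>f. 0)" by (intro ext poly_mapping_eqI) simp
qed

lemma lie_bracket_op_scale_Delta:
  "lie_bracket (op_scale c (Delta s \<beta>)) (op_scale d (Delta r \<beta>)) =
     op_scale (c * d * (pairing \<beta> r - pairing \<beta> s)) (Delta (\<lambda>i. s i + r i) \<beta>)"
proof (intro ext poly_mapping_eqI)
  fix f k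
  let ?t = "\<lambda>i. s i + r i"
  show "Poly_Mapping.lookup (lie_bracket (op_scale c (Delta s \<beta>)) (op_scale d (Delta r \<beta>)) f) k =
    Poly_Mapping.lookup (op_scale (c * d * (pairing \<beta> r - pairing \<beta> s)) (Delta ?t \<beta>) f) k"
  proof (cases "?t \<le> k")
    case True
    have "s i \<le> k i \<and> r i \<le> k i \<and> r i \<le> k i - s i \<and> s i \<le> k i - r i" for i
      using True[unfolded le_fun_def, rule_format, of i] by linarith
    then have le: "s \<le> k" "r \<le> k" "r \<le> k - s" "s \<le> k - r"
      by (simp_all add: le_fun_def)
    have "k - s = (\<lambda>i. (k - ?t) i + r i)" "k - r = (\<lambda>i. (k - ?t) i + s i)"
      "k - s - r = k - ?t" "k - r - s = k - ?t"
      using True by (auto simp: fun_eq_iff le_fun_def dest!: spec)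
    then show ?thesis
      using True le by (simp add: lie_bracket_def lookup_minus lookup_Delta pairing_add algebra_simps)
  next
    case False
    then have "\<not> (s \<le> k \<and> r \<le> k - s)" "\<not> (r \<le> k \<and> s \<le> k - r)"
      by (auto simp: le_fun_def le_diff_conv2 add.commute)
    then show ?thesis
      using False by (simp add: lie_bracket_def lookup_minus lookup_Delta)
  qed
qed

definition linear_op :: "('n, 'a::field) mop \<Rightarrow> bool" where
  "linear_op D \<longleftrightarrow> (\<forall>f g. D (f + g) = D f + D g)
     \<and> (\<forall>c f. D (Poly_Mapping.map ((*) c) f) = Poly_Mapping.map ((*) c) (D f))"

definition op_comb :: "'a::field \<Rightarrow> ('n, 'a) mop \<Rightarrow> 'a \<Rightarrow> ('n, 'a) mop \<Rightarrow> ('n, 'a) mop" where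
  "op_comb \<alpha> D \<gamma> E = (\<lambda>f. op_scale \<alpha> D f + op_scale \<gamma> E f)"

lemma lookup_op_comb [simp]:
  "Poly_Mapping.lookup (op_comb \<alpha> D \<gamma> E f) k =
     \<alpha> * Poly_Mapping.lookup (D f) k + \<gamma> * Poly_Mapping.lookup (E f) k"
  by (simp add: op_comb_def lookup_add)

lemma linear_op_Delta: "linear_op (Delta p \<beta>)"
  unfolding linear_op_def
  by (intro conjI allI; rule poly_mapping_eqI) (simp_all add: lookup_Delta lookup_add algebra_simps)

lemma lie_bracket_op_comb_commuting:
  assumes "linear_op D" "linear_op E" and "lie_bracket D E = (\<lambda>f. 0)"
  shows "lie_bracket (op_comb \<alpha> D \<gamma> E) (op_comb \<alpha>' D \<gamma>' E) = (\<lambda>f. 0)"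
proof (intro ext poly_mapping_eqI)
  fix f k
  have "D (E g) = E (D g)" for g
    using fun_cong[OF assms(3), of g] by (simp add: lie_bracket_def)
  with assms(1,2) have "op_comb \<alpha> D \<gamma> E (op_comb \<alpha>' D \<gamma>' E f) = op_comb \<alpha>' D \<gamma>' E (op_comb \<alpha> D \<gamma> E f)"
    unfolding linear_op_def op_comb_def op_scale_eq_map
    by (intro poly_mapping_eqI) (simp add: lookup_add algebra_simps)
  then show "Poly_Mapping.lookup (lie_bracket (op_comb \<alpha> D \<gamma> E) (op_comb \<alpha>' D \<gamma>' E) f) k =
      Poly_Mapping.lookup 0 k"
    by (simp add: lie_bracket_def)
qed

lemma lie_generated_commuting_op_comb:
  assumes "linear_op D" "linear_op E" "lie_bracket D E = (\<lambda>f. 0)"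
    and "X \<in> lie_generated D E"
  shows "\<exists>\<alpha> \<gamma>. X = op_comb \<alpha> D \<gamma> E"
  using assms(4)
proof induction
  case gen1
  have "D = op_comb 1 D 0 E" by (intro ext poly_mapping_eqI) simp
  then show ?case by blast
next
  case gen2
  have "E = op_comb 0 D 1 E" by (intro ext poly_mapping_eqI) simp
  then show ?case by blast
next
  case zero
  have "(\<lambda>f. 0) = op_comb 0 D 0 E" by (intro ext poly_mapping_eqI) simp
  then show ?case by blast
next
  case (add X Y)
  then obtain \<alpha> \<gamma> \<alpha>' \<gamma>' where "X = op_comb \<alpha> D \<gamma> E" "Y = op_comb \<alpha>' D \<gamma>' E" by blast
  then have "(\<lambda>f. X f + Y f) = op_comb (\<alpha> + \<alpha>') D (\<gamma> + \<gamma>') E"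
    by (intro ext poly_mapping_eqI) (simp add: lookup_add algebra_simps)
  then show ?case by blast
next
  case (scale X c)
  then obtain \<alpha> \<gamma> where "X = op_comb \<alpha> D \<gamma> E" by blast
  then have "op_scale c X = op_comb (c * \<alpha>) D (c * \<gamma>) E"
    by (intro ext poly_mapping_eqI) (simp add: algebra_simps)
  then show ?case by blast
next
  case (bracket X Y)
  then obtain \<alpha> \<gamma> \<alpha>' \<gamma>' where "X = op_comb \<alpha> D \<gamma> E" "Y = op_comb \<alpha>' D \<gamma>' E" by blast
  then have "lie_bracket X Y = op_comb 0 D 0 E"
    using lie_bracket_op_comb_commuting[OF assms(1-3)] by (auto intro!: ext poly_mapping_eqI)
  then show ?case by blast
qed

lemma fin_dim_ops_op_comb:
  assumes "\<And>X. X \<in> L \<Longrightarrow> \<exists>\<alpha> \<gamma>. X = op_comb \<alpha> D \<gamma> E"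
  shows "fin_dim_ops L"
  unfolding fin_dim_ops_def
proof (intro exI[of _ "{D, E}"] conjI ballI)
  fix X assume "X \<in> L"
  then obtain \<alpha> \<gamma> where X: "X = op_comb \<alpha> D \<gamma> E" using assms by blast
  show "\<exists>c. X = (\<lambda>f. \<Sum>b\<in>{D, E}. op_scale (c b) b f)"
  proof (cases "D = E")
    case True
    show ?thesis
      by (intro exI[of _ "\<lambda>_. \<alpha> + \<gamma>"] ext poly_mapping_eqI)
        (simp add: X True algebra_simps)
  next
    case False
    then show ?thesis
      by (intro exI[of _ "\<lambda>b. if b = D then \<alpha> else \<gamma>"] ext poly_mapping_eqI)
        (auto simp: X lookup_add)
  qed
qed simp

lemma fin_dim_ops_lie_generated_commuting:
  assumes "linear_op D" "linear_op E" "lie_bracket D E = (\<lambda>f. 0)"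
  shows "fin_dim_ops (lie_generated D E)"
  using lie_generated_commuting_op_comb[OF assms] by (rule fin_dim_ops_op_comb)

lemma fin_dim_ops_finite_keys:
  assumes "fin_dim_ops L"
  shows "finite (\<Union>X\<in>L. Poly_Mapping.keys (X f))"
proof -
  obtain B where "finite B" and B: "\<forall>X\<in>L. \<exists>c. X = (\<lambda>f. \<Sum>b\<in>B. op_scale (c b) b f)"
    using assms unfolding fin_dim_ops_def by blast
  have "Poly_Mapping.keys (X f) \<subseteq> (\<Union>b\<in>B. Poly_Mapping.keys (b f))" if "X \<in> L" for X
  proof
    fix k assume "k \<in> Poly_Mapping.keys (X f)"
    moreover obtain c where "X = (\<lambda>f. \<Sum>b\<in>B. op_scale (c b) b f)" using B \<open>X \<in> L\<close> by blast
    ultimately have "(\<Sum>b\<in>B. c b * Poly_Mapping.lookup (b f) k) \<noteq> 0"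
      by (simp add: in_keys_iff lookup_sum)
    then obtain b where "b \<in> B" "Poly_Mapping.lookup (b f) k \<noteq> 0"
      by (metis (no_types, lifting) mult_zero_right sum.neutral)
    then show "k \<in> (\<Union>b\<in>B. Poly_Mapping.keys (b f))" by (auto simp: in_keys_iff)
  qed
  then have "(\<Union>X\<in>L. Poly_Mapping.keys (X f)) \<subseteq> (\<Union>b\<in>B. Poly_Mapping.keys (b f))" by blast
  moreover have "finite (\<Union>b\<in>B. Poly_Mapping.keys (b f))" using \<open>finite B\<close> by simp
  ultimately show ?thesis by (rule finite_subset)
qed

definition has_Delta :: "('n, 'a::field) mop set \<Rightarrow> ('n::finite \<Rightarrow> 'a) \<Rightarrow> ('n \<Rightarrow> nat) \<Rightarrow> bool" where
  "has_Delta L \<beta> r \<longleftrightarrow> (\<exists>c. c \<noteq> 0 \<and> op_scale c (Delta r \<beta>) \<in> L)"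

lemma not_fin_dim_ops_if_has_Delta_ray:
  assumes "\<beta> j \<noteq> 0" and "s i \<noteq> 0" and ray: "\<And>k. has_Delta L \<beta> (\<lambda>i. r i + k * s i)"
  shows "\<not> fin_dim_ops L"
proof
  assume "fin_dim_ops L"
  obtain m where m: "pairing \<beta> m \<noteq> 0" using pairing_nonzero_exists assms(1) by blast
  define f where "f = Poly_Mapping.single m (1::'a)"
  let ?g = "\<lambda>k::nat. \<lambda>i. m i + (r i + k * s i)"
  have "?g k \<in> (\<Union>X\<in>L. Poly_Mapping.keys (X f))" for k
  proof -
    obtain c where "c \<noteq> 0" "op_scale c (Delta (\<lambda>i. r i + k * s i) \<beta>) \<in> L"
      using ray unfolding has_Delta_def by blast
    with m show ?thesis
      by (intro UN_I[of "op_scale c (Delta (\<lambda>i. r i + k * s i) \<beta>)"])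
        (simp_all add: in_keys_iff f_def lookup_Delta_single)
  qed
  then have "range ?g \<subseteq> (\<Union>X\<in>L. Poly_Mapping.keys (X f))" by blast
  with fin_dim_ops_finite_keys[OF \<open>fin_dim_ops L\<close>] have "finite (range ?g)"
    by (rule finite_subset[rotated])
  moreover have "inj ?g"
  proof (rule injI)
    fix x y assume "?g x = ?g y"
    from fun_cong[OF this, of i] show "x = y" using \<open>s i \<noteq> 0\<close> by simp
  qed
  ultimately have "finite (UNIV :: nat set)" by (rule finite_imageD)
  then show False by simp
qed

lemma has_Delta_bracket_iterate:
  assumes "has_Delta (lie_generated D E) \<beta> s" and "has_Delta (lie_generated D E) \<beta> r"
    and "\<And>k::nat. pairing \<beta> r + of_nat k * pairing \<beta> s \<noteq> pairing \<beta> s"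
  shows "has_Delta (lie_generated D E) \<beta> (\<lambda>i. r i + k * s i)"
proof (induction k)
  case 0
  then show ?case using assms(2) by simp
next
  case (Suc k)
  obtain c where c: "c \<noteq> 0" "op_scale c (Delta s \<beta>) \<in> lie_generated D E"
    using assms(1) unfolding has_Delta_def by blast
  obtain d where d: "d \<noteq> 0" "op_scale d (Delta (\<lambda>i. r i + k * s i) \<beta>) \<in> lie_generated D E"
    using Suc unfolding has_Delta_def by blast
  have "lie_bracket (op_scale c (Delta s \<beta>)) (op_scale d (Delta (\<lambda>i. r i + k * s i) \<beta>))
      \<in> lie_generated D E"
    using c d by (intro lie_generated.bracket)
  moreover have "(\<lambda>i. s i + (r i + k * s i)) = (\<lambda>i. r i + Suc k * s i)" by auto
  ultimately have "op_scale (c * d * (pairing \<beta> r + of_nat k * pairing \<beta> s - pairing \<beta> s))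
      (Delta (\<lambda>i. r i + Suc k * s i) \<beta>) \<in> lie_generated D E"
    by (simp add: lie_bracket_op_scale_Delta pairing_add_mult)
  moreover have "c * d * (pairing \<beta> r + of_nat k * pairing \<beta> s - pairing \<beta> s) \<noteq> 0"
    using c d assms(3)[of k] by simp
  ultimately show ?case unfolding has_Delta_def by blast
qed

lemma add_eq_0_if_mutual_shifts:
  fixes a b :: "'a::field_char_0"
  assumes "a \<noteq> b" and ka: "b + of_nat k * a = a" and mb: "a + of_nat m * b = b"
  shows "a + b = 0"
proof -
  have "a \<noteq> 0" using assms by auto
  have "b = (1 - of_nat k) * a" "a = (1 - of_nat m) * b"
    using ka mb by (simp_all add: algebra_simps eq_diff_eq)
  then have "a = ((1 - of_nat m) * (1 - of_nat k)) * a" by (simp only: mult.assoc)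
  with \<open>a \<noteq> 0\<close> have "(1 - of_nat m) * (1 - of_nat k) = (1::'a)"
    by (metis mult_cancel_right1)
  then have "of_int ((1 - int m) * (1 - int k)) = (1::'a)" by simp
  then have "(1 - int m) * (1 - int k) = 1" by (simp only: of_int_eq_1_iff)
  then have "k = 0 \<or> k = 2" by (auto simp: zmult_eq_1_iff)
  with assms show ?thesis by (auto simp: algebra_simps)
qed

lemma lie_generated_Delta_has_ray:
  fixes \<beta> :: "'n::finite \<Rightarrow> 'a::field_char_0"
  assumes "p i \<noteq> 0" and "q i' \<noteq> 0" and ne: "pairing \<beta> p \<noteq> pairing \<beta> q"
  shows "\<exists>s r. (\<exists>i. s i \<noteq> 0) \<and>
    (\<forall>k. has_Delta (lie_generated (Delta p \<beta>) (Delta q \<beta>)) \<beta> (\<lambda>i. r i + k * s i))"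
proof -
  let ?L = "lie_generated (Delta p \<beta>) (Delta q \<beta>)"
  let ?a = "pairing \<beta> p" and ?b = "pairing \<beta> q"
  have p: "has_Delta ?L \<beta> p" and q: "has_Delta ?L \<beta> q"
    unfolding has_Delta_def
    by (intro exI[of _ 1] conjI; simp add: lie_generated.gen1 lie_generated.gen2)+
  have "lie_bracket (Delta p \<beta>) (Delta q \<beta>) \<in> ?L"
    by (intro lie_generated.bracket lie_generated.gen1 lie_generated.gen2)
  then have "op_scale (?b - ?a) (Delta (\<lambda>i. p i + q i) \<beta>) \<in> ?L"
    using lie_bracket_op_scale_Delta[of 1 p \<beta> 1 q] by simp
  then have pq: "has_Delta ?L \<beta> (\<lambda>i. p i + q i)"
    unfolding has_Delta_def using ne by (intro exI[of _ "?b - ?a"]) simp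
  consider "\<forall>k::nat. ?b + of_nat k * ?a \<noteq> ?a" | "\<forall>k::nat. ?a + of_nat k * ?b \<noteq> ?b" | "?a + ?b = 0"
    using add_eq_0_if_mutual_shifts[OF ne] by blast
  then show ?thesis
  proof cases
    case 1
    then show ?thesis using has_Delta_bracket_iterate[OF p q] \<open>p i \<noteq> 0\<close>
      by (intro exI[of _ p] exI[of _ q]) auto
  next
    case 2
    then show ?thesis using has_Delta_bracket_iterate[OF q p] \<open>q i' \<noteq> 0\<close>
      by (intro exI[of _ q] exI[of _ p]) auto
  next
    case 3
    with ne have "?a \<noteq> 0" by auto
    with 3 have "?a + of_nat k * pairing \<beta> (\<lambda>i. p i + q i) \<noteq> pairing \<beta> (\<lambda>i. p i + q i)" for k :: nat
      by (simp add: pairing_add)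
    then show ?thesis using has_Delta_bracket_iterate[OF pq p] \<open>p i \<noteq> 0\<close>
      by (intro exI[of _ "\<lambda>i. p i + q i"] exI[of _ p]) auto
  qed
qed

theorem lemma4:
  fixes p q :: "'n::finite \<Rightarrow> nat" and \<beta> :: "'n \<Rightarrow> 'a::field_char_0"
  assumes "\<exists>j. p j \<noteq> 0" and "\<exists>j. q j \<noteq> 0" and "\<exists>j. \<beta> j \<noteq> 0"
  shows "(fin_dim_ops (lie_generated (Delta p \<beta>) (Delta q \<beta>))
            \<longleftrightarrow> lie_bracket (Delta p \<beta>) (Delta q \<beta>) = (\<lambda>f. 0))
       \<and> (lie_bracket (Delta p \<beta>) (Delta q \<beta>) = (\<lambda>f. 0)
            \<longleftrightarrow> pairing \<beta> p = pairing \<beta> q)"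
proof -
  obtain i i' j where "p i \<noteq> 0" "q i' \<noteq> 0" "\<beta> j \<noteq> 0" using assms by blast
  let ?L = "lie_generated (Delta p \<beta>) (Delta q \<beta>)"
  have "lie_bracket (Delta p \<beta>) (Delta q \<beta>) =
      op_scale (pairing \<beta> q - pairing \<beta> p) (Delta (\<lambda>i. p i + q i) \<beta>)"
    using lie_bracket_op_scale_Delta[of 1 p \<beta> 1 q] by simp
  then have commute_iff:
    "lie_bracket (Delta p \<beta>) (Delta q \<beta>) = (\<lambda>f. 0) \<longleftrightarrow> pairing \<beta> p = pairing \<beta> q"
    using op_scale_Delta_eq_zero_iff[of \<beta> j, OF \<open>\<beta> j \<noteq> 0\<close>] by auto
  have "fin_dim_ops ?L" if "pairing \<beta> p = pairing \<beta> q"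
    using that commute_iff by (simp add: fin_dim_ops_lie_generated_commuting linear_op_Delta)
  moreover have "pairing \<beta> p = pairing \<beta> q" if "fin_dim_ops ?L"
    using lie_generated_Delta_has_ray[of p i q i' \<beta>, OF \<open>p i \<noteq> 0\<close> \<open>q i' \<noteq> 0\<close>]
      not_fin_dim_ops_if_has_Delta_ray[of \<beta> j, OF \<open>\<beta> j \<noteq> 0\<close>] that by blast
  ultimately show ?thesis using commute_iff by blast
qed

end
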